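(* Let $n\ge2$, let $T$ be any representation of $U'_q(\mathrm{so}_n)$ on a complex vector space $\mathcal V$ with basis $\{v_\alpha\}$, and let $\mathcal V_{\mathbf 1}$ be an $n$-dimensional space with basis $v_1,\dots,v_n$. Then the linear maps $T^\otimes(I_{j,j-1})$, $j=2,\dots,n$, on $\mathcal V^\otimes=\mathcal V_{\mathbf 1}\otimes\mathcal V$ given by $$T^\otimes(I_{j,j-1})(v_{j-1}\otimes v_\alpha)=q\,v_{j-1}\otimes T(I_{j,j-1})v_\alpha-q^{1/2}\,v_j\otimes v_\alpha,$$ $$T^\otimes(I_{j,j-1})(v_{j}\otimes v_\alpha)=q^{-1}\,v_{j}\otimes T(I_{j,j-1})v_\alpha+q^{-1/2}\,v_{j-1}\otimes v_\alpha,$$ $$T^\otimes(I_{j,j-1})(v_k\otimes v_\alpha)=v_k\otimes T(I_{j,j-1})v_\alpha\quad (k\ne j,\ k\ne j-1),$$ define a representation $T^\otimes$ of $U'_q(\mathrm{so}_n)$ on $\mathcal V^\otimes$.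
   Context: Fix $q\in\mathbb{C}$, $q\ne0,\pm1$, not a root of unity, and a square root $q^{1/2}$. The algebra $U'_q(\mathrm{so}_n)$ is the unital complex associative algebra generated by $I_{21},I_{32},\dots,I_{n,n-1}$ with relations $I_{j,j-1}^2I_{j-1,j-2}+I_{j-1,j-2}I_{j,j-1}^2-(q+q^{-1})I_{j,j-1}I_{j-1,j-2}I_{j,j-1}=-I_{j-1,j-2}$, $I_{j-1,j-2}^2I_{j,j-1}+I_{j,j-1}I_{j-1,j-2}^2-(q+q^{-1})I_{j-1,j-2}I_{j,j-1}I_{j-1,j-2}=-I_{j,j-1}$, and $[I_{i,i-1},I_{j,j-1}]=0$ if $|i-j|>1$. A representation is an algebra homomorphism into the endomorphisms of the space (determined by the images of the generators). *)

theory Defs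
  imports Complex_Main "HOL-Library.Function_Algebras"
begin

text \<open>A representation of U'_q(so_n) on a subspace Vc of a complex vector space
  (type 'v with complex scalar multiplication sc): linear maps T j (j = 2..n)
  of Vc into itself satisfying the defining relations of U'_q(so_n).\<close>

definition is_rep_Uq ::
  "complex \<Rightarrow> nat \<Rightarrow> (complex \<Rightarrow> 'v::ab_group_add \<Rightarrow> 'v) \<Rightarrow> 'v set \<Rightarrow> (nat \<Rightarrow> 'v \<Rightarrow> 'v) \<Rightarrow> bool"
where
  "is_rep_Uq q n sc Vc T \<longleftrightarrow>
     (\<forall>j\<in>{2..n}. (\<forall>x\<in>Vc. T j x \<in> Vc)
        \<and> (\<forall>x\<in>Vc. \<forall>y\<in>Vc. T j (x + y) = T j x + T j y)
        \<and> (\<forall>c. \<forall>x\<in>Vc. T j (sc c x) = sc c (T j x)))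
   \<and> (\<forall>j\<in>{3..n}. \<forall>x\<in>Vc.
        T j (T j (T (j-1) x)) + T (j-1) (T j (T j x))
          - sc (q + inverse q) (T j (T (j-1) (T j x))) = - T (j-1) x)
   \<and> (\<forall>j\<in>{3..n}. \<forall>x\<in>Vc.
        T (j-1) (T (j-1) (T j x)) + T j (T (j-1) (T (j-1) x))
          - sc (q + inverse q) (T (j-1) (T j (T (j-1) x))) = - T j x)
   \<and> (\<forall>i\<in>{2..n}. \<forall>j\<in>{2..n}. (i + 1 < j \<or> j + 1 < i) \<longrightarrow>
        (\<forall>x\<in>Vc. T i (T j x) = T j (T i x)))"

definition cvs :: "(complex \<Rightarrow> 'v::ab_group_add \<Rightarrow> 'v) \<Rightarrow> bool" where
  "cvs sc \<longleftrightarrow> (\<forall>a x y. sc a (x + y) = sc a x + sc a y)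
     \<and> (\<forall>a b x. sc (a + b) x = sc a x + sc b x)
     \<and> (\<forall>a b x. sc a (sc b x) = sc (a * b) x)
     \<and> (\<forall>x. sc 1 x = x)"

text \<open>The tensor product V_1 \<otimes> V with V_1 = span{v_1..v_n} is identified with
  V^n: an element \<Sum>k v_k \<otimes> f k is the function f :: nat \<Rightarrow> 'v, supported in {1..n}.\<close>
definition tens_space :: "nat \<Rightarrow> (nat \<Rightarrow> 'v::zero) set" where
  "tens_space n = {f. \<forall>k. k \<notin> {1..n} \<longrightarrow> f k = 0}"

definition tens_scale :: "(complex \<Rightarrow> 'v \<Rightarrow> 'v) \<Rightarrow> complex \<Rightarrow> (nat \<Rightarrow> 'v) \<Rightarrow> nat \<Rightarrow> 'v" where
  "tens_scale sc c f = (\<lambda>k. sc c (f k))"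

text \<open>T-tensor of I_{j,j-1} extended linearly from the formulas on v_k \<otimes> v_\<alpha>;
  qh is the chosen square root q^{1/2}.\<close>
definition tens_rep ::
  "complex \<Rightarrow> complex \<Rightarrow> nat \<Rightarrow> (complex \<Rightarrow> 'v::ab_group_add \<Rightarrow> 'v) \<Rightarrow> (nat \<Rightarrow> 'v \<Rightarrow> 'v)
     \<Rightarrow> nat \<Rightarrow> (nat \<Rightarrow> 'v) \<Rightarrow> nat \<Rightarrow> 'v" where
  "tens_rep q qh n sc T j f = (\<lambda>k.
     if k \<notin> {1..n} then 0
     else if k = j - 1 then sc q (T j (f k)) + sc (inverse qh) (f j)
     else if k = j then sc (inverse q) (T j (f k)) - sc qh (f (j - 1))
     else T j (f k))"

end

theory Submission
  imports Defs
begin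

(* Identify V_1 \<otimes> V with V^n. The operator for I_{j,j-1} acts on each component by T(I_{j,j-1}),
   up to a scalar, and mixes only the components j-1 and j. So a cubic relation between the operators
   for I_{j,j-1} and I_{j-1,j-2} is the corresponding relation of T in every component except j-2, j-1
   and j. In those three components, each side is a linear combination of words in the two generators
   applied to components of the argument. Rewrite the word B A A using the relation
   A A B + B A A - [2] A B A = -B. The identity then comes down to comparing coefficients, which are
   Laurent polynomials in q^{1/2}. Generators that are not adjacent act on disjoint pairs of components,
   so they commute. *)

definition word_lincomb ::
  "('a::comm_ring_1 \<Rightarrow> 'v::ab_group_add \<Rightarrow> 'v) \<Rightarrow> ('i \<Rightarrow> 'v \<Rightarrow> 'v) \<Rightarrow> ('l \<Rightarrow> 'v)
     \<Rightarrow> ('a \<times> 'i list \<times> 'l) list \<Rightarrow> 'v" where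
  "word_lincomb sc T f L = (\<Sum>(c, w, l) \<leftarrow> L. sc c (foldr T w (f l)))"

definition lincomb_coeff :: "('a::comm_monoid_add \<times> 'x) list \<Rightarrow> 'x \<Rightarrow> 'a" where
  "lincomb_coeff L x = (\<Sum>(c, y) \<leftarrow> L. if x = y then c else 0)"

lemma word_lincomb_Nil [simp]: "word_lincomb sc T f [] = 0"
  and word_lincomb_Cons [simp]:
    "word_lincomb sc T f ((c, w, l) # L) = sc c (foldr T w (f l)) + word_lincomb sc T f L"
  by (simp_all add: word_lincomb_def)

lemma word_lincomb_append:
  "word_lincomb sc T f (L1 @ L2) = word_lincomb sc T f L1 + word_lincomb sc T f L2"
  by (simp add: word_lincomb_def)

lemma word_lincomb_atom: "module sc \<Longrightarrow> f l = word_lincomb sc T f [(1, [], l)]"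
  by (simp add: module.scale_one)

lemma scale_word_lincomb:
  assumes "module sc"
  shows "sc d (word_lincomb sc T f L) = word_lincomb sc T f (map (\<lambda>(c, w, l). (d * c, w, l)) L)"
proof -
  interpret module sc by fact
  show ?thesis by (induction L) (auto simp: scale_right_distrib)
qed

lemma uminus_word_lincomb:
  assumes "module sc"
  shows "- word_lincomb sc T f L = word_lincomb sc T f (map (\<lambda>(c, w, l). (- c, w, l)) L)"
proof -
  interpret module sc by fact
  show ?thesis by (induction L) auto
qed

lemma diff_word_lincomb:
  assumes "module sc"
  shows "word_lincomb sc T f L1 - word_lincomb sc T f L2
    = word_lincomb sc T f (L1 @ map (\<lambda>(c, w, l). (- c, w, l)) L2)"
  using uminus_word_lincomb[OF assms, of T f L2] by (simp add: word_lincomb_append)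

lemma module_hom_word_lincomb:
  assumes "module_hom sc sc (T i)"
  shows "T i (word_lincomb sc T f L) = word_lincomb sc T f (map (\<lambda>(c, w, l). (c, i # w, l)) L)"
proof -
  interpret module_hom sc sc "T i" by fact
  show ?thesis by (induction L) (auto simp: add scale)
qed

lemma lincomb_coeff_Nil [simp]: "lincomb_coeff [] x = 0"
  and lincomb_coeff_Cons [simp]:
    "lincomb_coeff ((c, y) # L) x = (if x = y then c else 0) + lincomb_coeff L x"
  by (simp_all add: lincomb_coeff_def)

lemma word_lincomb_eq_sum_coeff:
  assumes "module sc" and "finite A" and "snd ` set L \<subseteq> A"
  shows "word_lincomb sc T f L = (\<Sum>(w, l) \<in> A. sc (lincomb_coeff L (w, l)) (foldr T w (f l)))"
  using assms(3)
proof (induction L)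
  case Nil
  interpret module sc by fact
  show ?case by simp
next
  case (Cons p L)
  interpret module sc by fact
  obtain c w l where p: "p = (c, w, l)" by (cases p)
  have "(w, l) \<in> A" using Cons.prems p by auto
  then have "sc c (foldr T w (f l))
      = (\<Sum>x \<in> A. if x = (w, l) then sc c (foldr T (fst x) (f (snd x))) else 0)"
    by (simp only: sum.delta[OF assms(2)]) simp
  also have "\<dots> = (\<Sum>(v, k) \<in> A. sc (if (v, k) = (w, l) then c else 0) (foldr T v (f k)))"
    by (intro sum.cong) (auto split: if_split_asm)
  finally show ?case
    using Cons by (simp add: p scale_left_distrib sum.distrib case_prod_unfold)
qed

lemma word_lincomb_eq_by_coeff:
  assumes "module sc"
    and "\<forall>x \<in> snd ` set (L1 @ L2). lincomb_coeff L1 x = lincomb_coeff L2 x"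
  shows "word_lincomb sc T f L1 = word_lincomb sc T f L2"
proof -
  let ?A = "snd ` set (L1 @ L2)"
  have "word_lincomb sc T f L1 = (\<Sum>(w, l) \<in> ?A. sc (lincomb_coeff L1 (w, l)) (foldr T w (f l)))"
    by (rule word_lincomb_eq_sum_coeff[OF assms(1)]) auto
  also have "\<dots> = (\<Sum>(w, l) \<in> ?A. sc (lincomb_coeff L2 (w, l)) (foldr T w (f l)))"
  proof (rule sum.cong)
    fix x assume "x \<in> ?A"
    then have "lincomb_coeff L1 x = lincomb_coeff L2 x" using assms(2) by blast
    then show "(\<lambda>(w, l). sc (lincomb_coeff L1 (w, l)) (foldr T w (f l))) x
        = (\<lambda>(w, l). sc (lincomb_coeff L2 (w, l)) (foldr T w (f l))) x"
      by (simp add: case_prod_unfold)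
  qed simp
  also have "\<dots> = word_lincomb sc T f L2"
    by (rule word_lincomb_eq_sum_coeff[OF assms(1), symmetric]) auto
  finally show ?thesis .
qed

definition serre_reduce ::
  "'a::comm_ring_1 \<Rightarrow> 'i \<Rightarrow> 'i \<Rightarrow> 'a \<times> 'i list \<times> 'l \<Rightarrow> ('a \<times> 'i list \<times> 'l) list" where
  "serre_reduce d a b = (\<lambda>(c, w, l).
    if w = [b, a, a] then [(d * c, [a, b, a], l), (- c, [a, a, b], l), (- c, [b], l)]
    else [(c, w, l)])"

lemma word_lincomb_serre_reduce:
  assumes "module sc"
    and "\<forall>x. T a (T a (T b x)) + T b (T a (T a x)) - sc d (T a (T b (T a x))) = - T b x"
  shows "word_lincomb sc T f (concat (map (serre_reduce d a b) L)) = word_lincomb sc T f L"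
proof (induction L)
  case (Cons p L)
  interpret module sc by fact
  obtain c w l where p: "p = (c, w, l)" by (cases p)
  have "T b (T a (T a x)) = sc d (T a (T b (T a x))) - T a (T a (T b x)) - T b x" for x
    using assms(2)[rule_format, of x] by (simp add: algebra_simps eq_neg_iff_add_eq_0)
  then have "sc c (T b (T a (T a x)))
      = sc (d * c) (T a (T b (T a x))) + (sc (- c) (T a (T a (T b x))) + sc (- c) (T b x))" for x
    by (simp add: scale_right_diff_distrib mult.commute)
  with Cons show ?case
    by (simp add: p serre_reduce_def add.assoc)
qed simp

lemma word_lincomb_eq_by_serre_coeff:
  fixes sc :: "'a::comm_ring_1 \<Rightarrow> 'v::ab_group_add \<Rightarrow> 'v" and d :: 'a and a b :: 'i
  defines "R \<equiv> \<lambda>L. concat (map (serre_reduce d a b) L)"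
  assumes "module sc"
    and "\<forall>x. T a (T a (T b x)) + T b (T a (T a x)) - sc d (T a (T b (T a x))) = - T b x"
    and "\<forall>x \<in> snd ` set (R L1 @ R L2). lincomb_coeff (R L1) x = lincomb_coeff (R L2) x"
  shows "word_lincomb sc T f L1 = word_lincomb sc T f L2"
  using word_lincomb_eq_by_coeff[OF assms(2) assms(4)] word_lincomb_serre_reduce[OF assms(2,3)]
  unfolding R_def by metis

definition q_serre ::
  "(complex \<Rightarrow> 'v::ab_group_add \<Rightarrow> 'v) \<Rightarrow> complex \<Rightarrow> 'v set \<Rightarrow> ('v \<Rightarrow> 'v) \<Rightarrow> ('v \<Rightarrow> 'v) \<Rightarrow> bool"
  where "q_serre sc q V A B \<longleftrightarrow>
    (\<forall>x\<in>V. A (A (B x)) + B (A (A x)) - sc (q + inverse q) (A (B (A x))) = - B x)"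

lemma q_serre_subset: "V \<subseteq> W \<Longrightarrow> q_serre sc q W A B \<Longrightarrow> q_serre sc q V A B"
  by (auto simp: q_serre_def)

lemma is_rep_UqI:
  assumes "\<And>j. j \<in> {2..n} \<Longrightarrow> T j ` V \<subseteq> V"
    and "\<And>j. j \<in> {2..n} \<Longrightarrow> module_hom sc sc (T j)"
    and "\<And>j. j \<in> {3..n} \<Longrightarrow> q_serre sc q V (T j) (T (j - 1)) \<and> q_serre sc q V (T (j - 1)) (T j)"
    and "\<And>i j. i \<in> {2..n} \<Longrightarrow> j \<in> {2..n} \<Longrightarrow> i + 1 < j \<Longrightarrow> T i \<circ> T j = T j \<circ> T i"
  shows "is_rep_Uq q n sc V T"
  unfolding is_rep_Uq_def
proof (intro conjI, goal_cases)
  case 1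
  show ?case using assms(1,2) unfolding module_hom_iff by blast
next
  case 2
  show ?case using assms(3) by (simp add: q_serre_def)
next
  case 3
  show ?case using assms(3) by (simp add: q_serre_def)
next
  case 4
  show ?case using assms(4) by (metis comp_apply)
qed

lemma is_rep_Uq_UNIV_D:
  assumes "module sc" and "is_rep_Uq q n sc UNIV T"
  shows "\<And>j. j \<in> {2..n} \<Longrightarrow> module_hom sc sc (T j)"
    and "\<And>j. j \<in> {3..n} \<Longrightarrow> q_serre sc q UNIV (T j) (T (j - 1)) \<and> q_serre sc q UNIV (T (j - 1)) (T j)"
    and "\<And>i j. i \<in> {2..n} \<Longrightarrow> j \<in> {2..n} \<Longrightarrow> i + 1 < j \<Longrightarrow> T i \<circ> T j = T j \<circ> T i"
  using assms by (simp_all add: is_rep_Uq_def q_serre_def module_hom_iff fun_eq_iff)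

lemma module_tens_scale: "module sc \<Longrightarrow> module (tens_scale sc)"
  by (simp add: module_def tens_scale_def fun_eq_iff)

lemma module_hom_tens_rep:
  assumes "module sc" and "module_hom sc sc (T j)"
  shows "module_hom (tens_scale sc) (tens_scale sc) (tens_rep q qh n sc T j)"
proof -
  interpret module sc by fact
  interpret module_hom sc sc "T j" by fact
  show ?thesis
    by (auto simp: module_hom_iff module_tens_scale[OF assms(1)] fun_eq_iff tens_rep_def
        tens_scale_def add scale algebra_simps)
qed

lemma tens_rep_in_tens_space: "tens_rep q qh n sc T j f \<in> tens_space n"
  by (simp add: tens_space_def tens_rep_def)

lemma tens_rep_commute:
  assumes "module_hom sc sc (T i)" "module_hom sc sc (T j)" and "2 \<le> i" "i + 1 < j" "j \<le> n"
    and "T i \<circ> T j = T j \<circ> T i"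
  shows "tens_rep q qh n sc T i \<circ> tens_rep q qh n sc T j = tens_rep q qh n sc T j \<circ> tens_rep q qh n sc T i"
proof -
  interpret Ti: module_hom sc sc "T i" by fact
  interpret Tj: module_hom sc sc "T j" by fact
  obtain a b where ab: "i = Suc a" "j = Suc b" "1 \<le> a" "Suc a < b" "Suc b \<le> n"
    using assms(3-5) by (intro that[of "i - 1" "j - 1"]) auto
  have "T i (T j x) = T j (T i x)" for x using assms(6) by (metis comp_apply)
  note lin = Ti.add Ti.scale Ti.diff Tj.add Tj.scale Tj.diff this
  have "tens_rep q qh n sc T i (tens_rep q qh n sc T j f) k = tens_rep q qh n sc T j (tens_rep q qh n sc T i f) k"
    for f k
    using ab by (cases "k \<in> {a, Suc a, b, Suc b}") (auto simp: tens_rep_def lin[unfolded ab(1,2)])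
  then show ?thesis by (simp add: fun_eq_iff)
qed

lemma tens_rep_q_serre:
  assumes M: "module sc" and qh: "qh\<^sup>2 = q" "qh \<noteq> 0"
    and j: "3 \<le> j" "j \<le> n" and ab: "a = j \<and> b = j - 1 \<or> a = j - 1 \<and> b = j"
    and hom: "module_hom sc sc (T j)" "module_hom sc sc (T (j - 1))"
    and rel: "q_serre sc q UNIV (T a) (T b)"
  shows "q_serre (tens_scale sc) q UNIV (tens_rep q qh n sc T a) (tens_rep q qh n sc T b)"
proof -
  obtain m where m: "j = Suc (Suc (Suc m))"
    using j(1) by (intro that[of "j - 3"]) simp
  have n: "Suc m \<le> n" "Suc (Suc m) \<le> n" "Suc (Suc (Suc m)) \<le> n"
    using j(2) m by simp_all
  have ab': "a = Suc (Suc (Suc m)) \<and> b = Suc (Suc m) \<or> a = Suc (Suc m) \<and> b = Suc (Suc (Suc m))"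
    using ab m by simp
  have rel': "\<forall>x. T a (T a (T b x)) + T b (T a (T a x)) - sc (q + inverse q) (T a (T b (T a x))) = - T b x"
    using rel by (simp add: q_serre_def)
  show ?thesis
    unfolding q_serre_def
  proof (intro ballI ext, goal_cases)
    case (1 f k)
    note word_lincomb_rules = word_lincomb_atom[OF M, where f = f and T = T]
      word_lincomb_append[symmetric] diff_word_lincomb[OF M] uminus_word_lincomb[OF M]
      scale_word_lincomb[OF M] hom[unfolded m diff_Suc_1, THEN module_hom_word_lincomb[where T = T]]
    consider (block) "k \<in> {Suc m, Suc (Suc m), Suc (Suc (Suc m))}"
      | (other) "k \<notin> {Suc m, Suc (Suc m), Suc (Suc (Suc m))}" by blast
    then show ?case
    proof cases
      case block
      show ?thesis
        by (insert ab' block rel', elim disjE conjE insertE emptyE; hypsubst_thin;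
            simp (no_asm_simp) add: n tens_rep_def tens_scale_def word_lincomb_rules
              del: word_lincomb_Nil word_lincomb_Cons;
            rule word_lincomb_eq_by_serre_coeff[where T = T, OF M], assumption;
            simp (no_asm) add: serre_reduce_def qh(2) field_simps flip: qh(1))
    next
      case other
      show ?thesis
      proof (cases "k \<in> {1..n}")
        case True
        with other ab' have "tens_rep q qh n sc T c g k = T c (g k)" if "c \<in> {a, b}" for c g
          using that by (auto simp: tens_rep_def)
        with rel' show ?thesis by (simp add: tens_scale_def)
      next
        case False
        then show ?thesis by (simp add: tens_rep_def tens_scale_def module.scale_zero_right[OF M])
      qed
    qed
  qed
qed

theorem proposition2:
  fixes q qh :: complex and n :: nat
    and sc :: "complex \<Rightarrow> 'v::ab_group_add \<Rightarrow> 'v" and T :: "nat \<Rightarrow> 'v \<Rightarrow> 'v"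
  assumes "q \<noteq> 0" and "q \<noteq> 1" and "q \<noteq> -1"
    and "\<forall>m::nat. m > 0 \<longrightarrow> q ^ m \<noteq> 1"
    and "qh ^ 2 = q"
    and "n \<ge> 2"
    and "cvs sc"
    and "is_rep_Uq q n sc UNIV T"
  shows "is_rep_Uq q n (tens_scale sc) (tens_space n) (tens_rep q qh n sc T)"
proof -
  have M: "module sc" using assms(7) by (simp add: cvs_def module_def)
  have qh: "qh \<noteq> 0" using assms(1,5) by auto
  note hom = is_rep_Uq_UNIV_D(1)[OF M assms(8)]
    and rel = is_rep_Uq_UNIV_D(2)[OF M assms(8)]
    and comm = is_rep_Uq_UNIV_D(3)[OF M assms(8)]
  show ?thesis
  proof (rule is_rep_UqI)
    fix j
    show "tens_rep q qh n sc T j ` tens_space n \<subseteq> tens_space n"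
      using tens_rep_in_tens_space by blast
    assume "j \<in> {2..n}"
    then show "module_hom (tens_scale sc) (tens_scale sc) (tens_rep q qh n sc T j)"
      by (intro module_hom_tens_rep M hom)
  next
    fix j assume j: "j \<in> {3..n}"
    then have j': "3 \<le> j" "j \<le> n" "j \<in> {2..n}" "j - 1 \<in> {2..n}" by auto
    from rel[OF j] have "q_serre sc q UNIV (T j) (T (j - 1))" "q_serre sc q UNIV (T (j - 1)) (T j)"
      by auto
    with j' hom[OF j'(3)] hom[OF j'(4)]
    show "q_serre (tens_scale sc) q (tens_space n) (tens_rep q qh n sc T j) (tens_rep q qh n sc T (j - 1))
        \<and> q_serre (tens_scale sc) q (tens_space n) (tens_rep q qh n sc T (j - 1)) (tens_rep q qh n sc T j)"
      by (blast intro: q_serre_subset[OF subset_UNIV] tens_rep_q_serre[where T = T, OF M assms(5) qh])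
  next
    fix i j assume ij: "i \<in> {2..n}" "j \<in> {2..n}" "i + 1 < j"
    then show "tens_rep q qh n sc T i \<circ> tens_rep q qh n sc T j = tens_rep q qh n sc T j \<circ> tens_rep q qh n sc T i"
      using tens_rep_commute[where T = T, OF hom[OF ij(1)] hom[OF ij(2)] _ ij(3) _ comm[OF ij]] by simp
  qed
qed

end
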